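(* Let $G$ and $H$ be connected graphs of order at least two. If $\Delta(G_{\rm SR})\ge 2$ or $\Delta(H_{\rm SR})\ge 2$, then $O_{\rm SR}(G\,\square\, H)=\mathcal{B}$.
   Context: All graphs are finite, simple and undirected; $d(x,y)$ is the shortest-path distance and $\Delta$ denotes maximum degree. The Cartesian product $G\,\square\,H$ has vertex set $V(G)\times V(H)$, with $(u,w)$ adjacent to $(u',w')$ iff either $u=u'$ and $ww'\in E(H)$, or $w=w'$ and $uu'\in E(G)$. A set $S\subseteq V(X)$ is a strong resolving set of a connected graph $X$ if for all distinct $x,y\in V(X)$ there exists $z\in S$ such that $x$ lies on a $y$–$z$ geodesic or $y$ lies on an $x$–$z$ geodesic. A vertex $u$ is maximally distant from $v$ if $d(u,v)\ge d(w,v)$ for every neighbor $w$ of $u$; $u,v$ are mutually maximally distant (MMD) if each is maximally distant from the other. The strong resolving graph $X_{\rm SR}$ has vertex set $\{x: x\text{ is MMD with some }y\}$ and edges exactly the MMD pairs. The Maker–Breaker strong resolving game on $X$: Maker and Breaker alternately select a not-yet-chosen vertex of $X$; Maker wins if the vertices he selects contain a strong resolving set of $X$, Breaker wins otherwise. In the M-game Maker moves first, in the B-game Breaker moves first. $O_{\rm SR}(X)=\mathcal{M}$ if Maker has a winning strategy in both games, $\mathcal{B}$ if Breaker has a winning strategy in both, and $\mathcal{N}$ if the first player has a winning strategy in each. *)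

theory Defs
  imports Main
begin

definition simple_graph :: "'a set \<Rightarrow> ('a \<Rightarrow> 'a \<Rightarrow> bool) \<Rightarrow> bool" where
  "simple_graph V E \<longleftrightarrow> finite V \<and> (\<forall>x y. E x y \<longrightarrow> x \<in> V \<and> y \<in> V)
     \<and> (\<forall>x y. E x y \<longrightarrow> E y x) \<and> (\<forall>x. \<not> E x x)"

text \<open>A walk is a nonempty list of vertices with consecutive ones adjacent;
its length (number of edges) is length p - 1.\<close>

definition walk :: "'a set \<Rightarrow> ('a \<Rightarrow> 'a \<Rightarrow> bool) \<Rightarrow> 'a list \<Rightarrow> 'a \<Rightarrow> 'a \<Rightarrow> bool" where
  "walk V E p x y \<longleftrightarrow> p \<noteq> [] \<and> set p \<subseteq> V \<and> successively E p \<and> hd p = x \<and> last p = y"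

definition connected_graph :: "'a set \<Rightarrow> ('a \<Rightarrow> 'a \<Rightarrow> bool) \<Rightarrow> bool" where
  "connected_graph V E \<longleftrightarrow> simple_graph V E \<and> V \<noteq> {} \<and>
     (\<forall>x\<in>V. \<forall>y\<in>V. \<exists>p. walk V E p x y)"

definition dist :: "'a set \<Rightarrow> ('a \<Rightarrow> 'a \<Rightarrow> bool) \<Rightarrow> 'a \<Rightarrow> 'a \<Rightarrow> nat" where
  "dist V E x y = (LEAST n. \<exists>p. walk V E p x y \<and> length p = Suc n)"

definition geodesic :: "'a set \<Rightarrow> ('a \<Rightarrow> 'a \<Rightarrow> bool) \<Rightarrow> 'a list \<Rightarrow> 'a \<Rightarrow> 'a \<Rightarrow> bool" where
  "geodesic V E p y z \<longleftrightarrow> walk V E p y z \<and> length p = Suc (dist V E y z)"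

definition on_geodesic :: "'a set \<Rightarrow> ('a \<Rightarrow> 'a \<Rightarrow> bool) \<Rightarrow> 'a \<Rightarrow> 'a \<Rightarrow> 'a \<Rightarrow> bool" where
  "on_geodesic V E x y z \<longleftrightarrow> (\<exists>p. geodesic V E p y z \<and> x \<in> set p)"

definition strong_resolving_set :: "'a set \<Rightarrow> ('a \<Rightarrow> 'a \<Rightarrow> bool) \<Rightarrow> 'a set \<Rightarrow> bool" where
  "strong_resolving_set V E S \<longleftrightarrow> S \<subseteq> V \<and>
     (\<forall>x\<in>V. \<forall>y\<in>V. x \<noteq> y \<longrightarrow>
        (\<exists>z\<in>S. on_geodesic V E x y z \<or> on_geodesic V E y x z))"

definition maximally_distant :: "'a set \<Rightarrow> ('a \<Rightarrow> 'a \<Rightarrow> bool) \<Rightarrow> 'a \<Rightarrow> 'a \<Rightarrow> bool" where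
  "maximally_distant V E u v \<longleftrightarrow> u \<in> V \<and> v \<in> V \<and>
     (\<forall>w\<in>V. E u w \<longrightarrow> dist V E w v \<le> dist V E u v)"

definition mmd :: "'a set \<Rightarrow> ('a \<Rightarrow> 'a \<Rightarrow> bool) \<Rightarrow> 'a \<Rightarrow> 'a \<Rightarrow> bool" where
  "mmd V E u v \<longleftrightarrow> maximally_distant V E u v \<and> maximally_distant V E v u"

definition sr_vertices :: "'a set \<Rightarrow> ('a \<Rightarrow> 'a \<Rightarrow> bool) \<Rightarrow> 'a set" where
  "sr_vertices V E = {x\<in>V. \<exists>y\<in>V. y \<noteq> x \<and> mmd V E x y}"

definition sr_edges :: "'a set \<Rightarrow> ('a \<Rightarrow> 'a \<Rightarrow> bool) \<Rightarrow> 'a \<Rightarrow> 'a \<Rightarrow> bool" where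
  "sr_edges V E x y \<longleftrightarrow> x \<noteq> y \<and> mmd V E x y"

definition degree :: "'a set \<Rightarrow> ('a \<Rightarrow> 'a \<Rightarrow> bool) \<Rightarrow> 'a \<Rightarrow> nat" where
  "degree V E x = card {y\<in>V. E x y}"

definition max_degree :: "'a set \<Rightarrow> ('a \<Rightarrow> 'a \<Rightarrow> bool) \<Rightarrow> nat" where
  "max_degree V E = Max (insert 0 (degree V E ` V))"

definition cart_edges :: "('a \<Rightarrow> 'a \<Rightarrow> bool) \<Rightarrow> ('b \<Rightarrow> 'b \<Rightarrow> bool) \<Rightarrow> 'a \<times> 'b \<Rightarrow> 'a \<times> 'b \<Rightarrow> bool" where
  "cart_edges EG EH p q \<longleftrightarrow>
     (fst p = fst q \<and> EH (snd p) (snd q)) \<or> (snd p = snd q \<and> EG (fst p) (fst q))"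

text \<open>Position: set of free vertices F,
Maker's chosen vertices M, and whose turn it is. The game ends when the board
is exhausted (n counts remaining moves, always card F); Maker wins iff his
final set satisfies the (superset-closed) winning predicate W.
maker_wins: Maker has a winning strategy from the position;
breaker_wins: Breaker has a winning strategy from the position.\<close>

fun maker_wins :: "('a set \<Rightarrow> bool) \<Rightarrow> nat \<Rightarrow> 'a set \<Rightarrow> 'a set \<Rightarrow> bool \<Rightarrow> bool" where
  "maker_wins W 0 F M makers_turn = W M"
| "maker_wins W (Suc n) F M True = (\<exists>v\<in>F. maker_wins W n (F - {v}) (insert v M) False)"
| "maker_wins W (Suc n) F M False = (\<forall>v\<in>F. maker_wins W n (F - {v}) M True)"

fun breaker_wins :: "('a set \<Rightarrow> bool) \<Rightarrow> nat \<Rightarrow> 'a set \<Rightarrow> 'a set \<Rightarrow> bool \<Rightarrow> bool" where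
  "breaker_wins W 0 F M makers_turn = (\<not> W M)"
| "breaker_wins W (Suc n) F M True = (\<forall>v\<in>F. breaker_wins W n (F - {v}) (insert v M) False)"
| "breaker_wins W (Suc n) F M False = (\<exists>v\<in>F. breaker_wins W n (F - {v}) M True)"

text \<open>Maker-start game (M-game) and Breaker-start game (B-game) of the strong
resolving game on X = (V, E).\<close>

definition SR_win :: "'a set \<Rightarrow> ('a \<Rightarrow> 'a \<Rightarrow> bool) \<Rightarrow> 'a set \<Rightarrow> bool" where
  "SR_win V E M \<longleftrightarrow> (\<exists>S\<subseteq>M. strong_resolving_set V E S)"

datatype outcome = Outcome_M | Outcome_B | Outcome_N | Outcome_P

definition O_SR :: "'a set \<Rightarrow> ('a \<Rightarrow> 'a \<Rightarrow> bool) \<Rightarrow> outcome" where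
  "O_SR V E =
    (let mM = maker_wins (SR_win V E) (card V) V {} True;
         mB = maker_wins (SR_win V E) (card V) V {} False;
         bM = breaker_wins (SR_win V E) (card V) V {} True;
         bB = breaker_wins (SR_win V E) (card V) V {} False
     in if mM \<and> mB then Outcome_M
        else if bM \<and> bB then Outcome_B
        else if mM \<and> bB then Outcome_N
        else Outcome_P)"

end

theory Submission
  imports Defs
begin

text \<open>If u and v are mutually maximally distant, no geodesic starting at one of them
passes through the other except as its endpoint, so every strong resolving set contains
u or v. Distances in G \<box> H are sums of distances in the factors, hence MMD pairs of G and
of H combine into MMD pairs of the product. Let a be MMD with both b and c in G, and let
x, y be a diametral (hence MMD) pair of H. In the product, (a,x) is MMD with (b,y) and
(c,y), and (a,y) is MMD with (b,x) and (c,x): two disjoint forks of the strong resolving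
graph. Moving first, Breaker claims the centre of a fork and then whichever leaf Maker
leaves; moving second, he answers Maker's first move by playing the same way on the fork
Maker did not touch. Either way Maker misses both ends of some MMD pair.\<close>

lemma connected_graph_symp: "connected_graph V E \<Longrightarrow> symp E"
  by (auto simp: connected_graph_def simple_graph_def intro: sympI)

lemma walk_singleton: "x \<in> V \<Longrightarrow> walk V E [x] x x"
  by (simp add: walk_def)

lemma walk_Cons_Cons_iff:
  "walk V E (a # b # p) x y \<longleftrightarrow> a = x \<and> a \<in> V \<and> E a b \<and> walk V E (b # p) b y"
  by (auto simp: walk_def)

lemma walk_endpoints: "walk V E p x y \<Longrightarrow> x \<in> V \<and> y \<in> V"
  unfolding walk_def by (metis hd_in_set last_in_set subsetD)

lemma walk_append:
  assumes "walk V E p x y" "walk V E q y z"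
  shows "walk V E (p @ tl q) x z"
proof -
  obtain q' where "q = y # q'" using assms(2) unfolding walk_def by (cases q) auto
  then show ?thesis using assms unfolding walk_def
    by (auto simp: successively_append_iff successively_Cons)
qed

lemma walk_rev: "symp E \<Longrightarrow> walk V E p x y \<Longrightarrow> walk V E (rev p) y x"
  unfolding walk_def
  by (auto simp: hd_rev last_rev elim!: successively_mono dest: sympD)

lemma walk_map:
  assumes "walk V E p x y" "\<And>v. v \<in> V \<Longrightarrow> f v \<in> V'" "\<And>v w. E v w \<Longrightarrow> E' (f v) (f w)"
  shows "walk V' E' (map f p) (f x) (f y)"
  using assms unfolding walk_def
  by (auto simp: successively_map hd_map last_map elim!: successively_mono)

lemma walk_take:
  assumes "walk V E p x y" "k < length p"
  shows "walk V E (take (Suc k) p) x (p ! k)"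
proof -
  have "successively E (take (Suc k) p)"
    using assms(1) successively_append_iff[of E "take (Suc k) p" "drop (Suc k) p"]
    by (simp add: walk_def)
  moreover have "set (take (Suc k) p) \<subseteq> V"
    using assms(1) set_take_subset unfolding walk_def by fast
  moreover have "last (take (Suc k) p) = p ! k"
    using assms(2) by (simp add: take_Suc_conv_app_nth)
  ultimately show ?thesis
    using assms by (auto simp: walk_def)
qed

lemma walk_drop:
  assumes "walk V E p x y" "k < length p"
  shows "walk V E (drop k p) (p ! k) y"
proof -
  have "successively E (drop k p)"
    using assms(1) successively_append_iff[of E "take k p" "drop k p"]
    by (simp add: walk_def)
  moreover have "set (drop k p) \<subseteq> V"
    using assms(1) set_drop_subset unfolding walk_def by fast
  ultimately show ?thesis
    using assms by (auto simp: walk_def hd_drop_conv_nth)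
qed

lemma dist_le_length:
  assumes "walk V E p x y"
  shows "Suc (dist V E x y) \<le> length p"
proof -
  have "length p = Suc (length p - 1)"
    using assms by (simp add: walk_def)
  with assms have "dist V E x y \<le> length p - 1"
    unfolding dist_def by (metis (mono_tags, lifting) Least_le)
  then show ?thesis using \<open>length p = Suc (length p - 1)\<close> by linarith
qed

lemma shortest_walk_exists:
  assumes "walk V E p x y"
  obtains q where "walk V E q x y" "length q = Suc (dist V E x y)"
proof -
  have "\<exists>n q. walk V E q x y \<and> length q = Suc n"
    using assms by (metis Suc_pred length_greater_0_conv walk_def)
  then have "\<exists>q. walk V E q x y \<and> length q = Suc (dist V E x y)"
    unfolding dist_def by (rule LeastI_ex)
  then show ?thesis using that by blast
qed

lemma dist_self: "x \<in> V \<Longrightarrow> dist V E x x = 0"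
  using dist_le_length[OF walk_singleton, of x V E] by simp

lemma dist_eq_0_imp_eq:
  assumes "walk V E p x y" "dist V E x y = 0"
  shows "x = y"
proof -
  obtain q where "walk V E q x y" "length q = 1"
    using shortest_walk_exists[OF assms(1)] assms(2) by (metis One_nat_def)
  then show ?thesis by (auto simp: walk_def length_Suc_conv)
qed

lemma dist_sym:
  assumes "symp E"
  shows "dist V E x y = dist V E y x"
proof -
  have "(\<exists>p. walk V E p x y \<and> length p = Suc n) \<longleftrightarrow> (\<exists>p. walk V E p y x \<and> length p = Suc n)"
    for n x y
    using walk_rev[OF assms] length_rev by metis
  then show ?thesis by (simp add: dist_def)
qed

lemma dist_neighbour_le:
  assumes "connected_graph V E" "E u w" "v \<in> V"
  shows "dist V E u v \<le> Suc (dist V E w v)"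
proof -
  have "u \<in> V" "w \<in> V" using assms(1,2) by (auto simp: connected_graph_def simple_graph_def)
  then obtain p where "walk V E p w v" using assms(1,3) by (auto simp: connected_graph_def)
  then obtain q where q: "walk V E q w v" "length q = Suc (dist V E w v)"
    by (rule shortest_walk_exists)
  then have "walk V E (u # q) u v"
    using \<open>u \<in> V\<close> assms(2) by (cases q) (auto simp: walk_def)
  from dist_le_length[OF this] q(2) show ?thesis by simp
qed

lemma dist_geodesic_nth:
  assumes "geodesic V E p x y" "k < length p"
  shows "dist V E x (p ! k) = k"
proof (rule antisym)
  have p: "walk V E p x y" "length p = Suc (dist V E x y)"
    using assms(1) by (auto simp: geodesic_def)
  show "dist V E x (p ! k) \<le> k"
    using dist_le_length[OF walk_take[OF p(1) assms(2)]] assms(2) by simp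
  obtain q where q: "walk V E q x (p ! k)" "length q = Suc (dist V E x (p ! k))"
    using shortest_walk_exists[OF walk_take[OF p(1) assms(2)]] .
  have "Suc (dist V E x y) \<le> length (q @ tl (drop k p))"
    using dist_le_length[OF walk_append[OF q(1) walk_drop[OF p(1) assms(2)]]] .
  then show "k \<le> dist V E x (p ! k)" using q(2) p(2) assms(2) by simp
qed

lemma mmd_commute: "mmd V E p q \<longleftrightarrow> mmd V E q p"
  by (auto simp: mmd_def)

lemma finite_sr_vertices: "connected_graph V E \<Longrightarrow> finite (sr_vertices V E)"
  unfolding connected_graph_def simple_graph_def sr_vertices_def by simp

lemma maximally_distant_on_geodesic:
  assumes "symp E" "maximally_distant V E p q" "on_geodesic V E p q z"
  shows "p = q \<or> p = z"
proof (rule ccontr)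
  assume "\<not> (p = q \<or> p = z)"
  then have "p \<noteq> q" "p \<noteq> z" by auto
  obtain P where P: "geodesic V E P q z" "p \<in> set P"
    using assms(3) by (auto simp: on_geodesic_def)
  then have wP: "walk V E P q z" by (simp add: geodesic_def)
  then have "P \<noteq> []" "hd P = q" "last P = z" by (auto simp: walk_def)
  obtain i where i: "i < length P" "P ! i = p" using P(2) by (metis in_set_conv_nth)
  have "i \<noteq> 0" using i \<open>p \<noteq> q\<close> \<open>hd P = q\<close> \<open>P \<noteq> []\<close> by (metis hd_conv_nth)
  have "Suc i < length P" using i \<open>p \<noteq> z\<close> \<open>last P = z\<close> \<open>P \<noteq> []\<close>
    by (metis Suc_lessI diff_Suc_1 last_conv_nth)
  \<comment> \<open>The successor of p on the geodesic is farther from q than p is.\<close>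
  define w where "w = P ! Suc i"
  have "E p w" "w \<in> V"
    using wP \<open>Suc i < length P\<close> i unfolding w_def walk_def
    by (auto simp: successively_nth)
  have "dist V E q p = i" "dist V E q w = Suc i"
    using dist_geodesic_nth[OF P(1)] i \<open>Suc i < length P\<close> by (auto simp: w_def)
  moreover have "dist V E w q \<le> dist V E p q"
    using assms(2) \<open>E p w\<close> \<open>w \<in> V\<close> by (simp add: maximally_distant_def)
  ultimately show False using dist_sym[OF assms(1)] by (metis Suc_n_not_le_n)
qed

lemma mmd_mem_strong_resolving_set:
  assumes "symp E" "strong_resolving_set V E S" "mmd V E p q" "p \<noteq> q"
  shows "p \<in> S \<or> q \<in> S"
proof -
  have "p \<in> V" "q \<in> V" using assms(3) by (auto simp: mmd_def maximally_distant_def)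
  then obtain z where "z \<in> S" "on_geodesic V E p q z \<or> on_geodesic V E q p z"
    using assms(2,4) unfolding strong_resolving_set_def by blast
  then show ?thesis
    using assms(1,3,4) maximally_distant_on_geodesic unfolding mmd_def by metis
qed

lemma symp_cart_edges: "symp EG \<Longrightarrow> symp EH \<Longrightarrow> symp (cart_edges EG EH)"
  by (auto simp: cart_edges_def intro!: sympI dest: sympD)

lemma cart_edge_dist_le:
  assumes G: "connected_graph VG EG" and H: "connected_graph VH EH"
    and "cart_edges EG EH a d" "b \<in> VG \<times> VH"
  shows "dist VG EG (fst a) (fst b) + dist VH EH (snd a) (snd b)
    \<le> Suc (dist VG EG (fst d) (fst b) + dist VH EH (snd d) (snd b))"
proof -
  from assms(3) consider "fst a = fst d" "EH (snd a) (snd d)" | "snd a = snd d" "EG (fst a) (fst d)"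
    unfolding cart_edges_def by blast
  then show ?thesis
  proof cases
    case 1
    then show ?thesis using dist_neighbour_le[OF H 1(2), of "snd b"] assms(4) by auto
  next
    case 2
    then show ?thesis using dist_neighbour_le[OF G 2(2), of "fst b"] assms(4) by auto
  qed
qed

lemma length_walk_cart_ge:
  assumes G: "connected_graph VG EG" and H: "connected_graph VH EH"
  shows "walk (VG \<times> VH) (cart_edges EG EH) P a b \<Longrightarrow>
    Suc (dist VG EG (fst a) (fst b) + dist VH EH (snd a) (snd b)) \<le> length P"
proof (induction P arbitrary: a)
  case Nil
  then show ?case by (simp add: walk_def)
next
  case (Cons c P)
  show ?case
  proof (cases P)
    case Nil
    then have "a = b" "fst a \<in> VG" "snd a \<in> VH"
      using Cons.prems by (auto simp: walk_def)
    then show ?thesis by (simp add: dist_self)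
  next
    case (Cons d P')
    then have e: "cart_edges EG EH a d" and w: "walk (VG \<times> VH) (cart_edges EG EH) P d b"
      using Cons.prems walk_Cons_Cons_iff[of "VG \<times> VH" "cart_edges EG EH" c d P' a b] by auto
    have "b \<in> VG \<times> VH"
      using walk_endpoints[OF w] by blast
    with e have "dist VG EG (fst a) (fst b) + dist VH EH (snd a) (snd b)
        \<le> Suc (dist VG EG (fst d) (fst b) + dist VH EH (snd d) (snd b))"
      by (rule cart_edge_dist_le[OF G H])
    also have "\<dots> \<le> length P"
      using Cons.IH[OF w] .
    finally show ?thesis by simp
  qed
qed

lemma dist_cart:
  assumes G: "connected_graph VG EG" and H: "connected_graph VH EH"
    and "u \<in> VG" "v \<in> VG" "x \<in> VH" "y \<in> VH"
  shows "dist (VG \<times> VH) (cart_edges EG EH) (u, x) (v, y) = dist VG EG u v + dist VH EH x y"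
proof (rule antisym)
  obtain pG where pG: "walk VG EG pG u v" "length pG = Suc (dist VG EG u v)"
  proof -
    obtain p where "walk VG EG p u v" using G assms(3,4) by (auto simp: connected_graph_def)
    then show ?thesis using that by (rule shortest_walk_exists)
  qed
  obtain pH where pH: "walk VH EH pH x y" "length pH = Suc (dist VH EH x y)"
  proof -
    obtain p where "walk VH EH p x y" using H assms(5,6) by (auto simp: connected_graph_def)
    then show ?thesis using that by (rule shortest_walk_exists)
  qed
  have "walk (VG \<times> VH) (cart_edges EG EH) (map (\<lambda>g. (g, x)) pG) (u, x) (v, x)"
    using walk_map[OF pG(1), of "\<lambda>g. (g, x)"] assms(5) by (auto simp: cart_edges_def)
  moreover have "walk (VG \<times> VH) (cart_edges EG EH) (map (Pair v) pH) (v, x) (v, y)"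
    using walk_map[OF pH(1), of "Pair v"] assms(4) by (auto simp: cart_edges_def)
  ultimately have w: "walk (VG \<times> VH) (cart_edges EG EH)
      (map (\<lambda>g. (g, x)) pG @ tl (map (Pair v) pH)) (u, x) (v, y)"
    by (rule walk_append)
  show "dist (VG \<times> VH) (cart_edges EG EH) (u, x) (v, y) \<le> dist VG EG u v + dist VH EH x y"
    using dist_le_length[OF w] pG(2) pH(2) by simp
  obtain P where "walk (VG \<times> VH) (cart_edges EG EH) P (u, x) (v, y)"
    "length P = Suc (dist (VG \<times> VH) (cart_edges EG EH) (u, x) (v, y))"
    using shortest_walk_exists[OF w] .
  from length_walk_cart_ge[OF G H this(1)] this(2)
  show "dist VG EG u v + dist VH EH x y \<le> dist (VG \<times> VH) (cart_edges EG EH) (u, x) (v, y)"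
    by simp
qed

lemma maximally_distant_cart:
  assumes G: "connected_graph VG EG" and H: "connected_graph VH EH"
    and "maximally_distant VG EG u v" "maximally_distant VH EH x y"
  shows "maximally_distant (VG \<times> VH) (cart_edges EG EH) (u, x) (v, y)"
  unfolding maximally_distant_def
proof (intro conjI ballI impI)
  have V: "u \<in> VG" "v \<in> VG" "x \<in> VH" "y \<in> VH"
    using assms(3,4) by (auto simp: maximally_distant_def)
  then show "(u, x) \<in> VG \<times> VH" "(v, y) \<in> VG \<times> VH" by auto
  fix w assume w: "w \<in> VG \<times> VH" "cart_edges EG EH (u, x) w"
  obtain w1 w2 where w12: "w = (w1, w2)" "w1 \<in> VG" "w2 \<in> VH" using w(1) by blast
  from w(2) consider "w1 = u" "EH x w2" | "w2 = x" "EG u w1"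
    unfolding w12(1) cart_edges_def by auto
  then have "dist VG EG w1 v + dist VH EH w2 y \<le> dist VG EG u v + dist VH EH x y"
    using assms(3,4) w12 unfolding maximally_distant_def by cases auto
  then show "dist (VG \<times> VH) (cart_edges EG EH) w (v, y)
      \<le> dist (VG \<times> VH) (cart_edges EG EH) (u, x) (v, y)"
    using V w12 by (simp add: dist_cart[OF G H])
qed

lemma mmd_cart:
  assumes "connected_graph VG EG" "connected_graph VH EH" "mmd VG EG u v" "mmd VH EH x y"
  shows "mmd (VG \<times> VH) (cart_edges EG EH) (u, x) (v, y)"
  using assms unfolding mmd_def by (simp add: maximally_distant_cart)

lemma diametral_pair_mmd:
  assumes G: "connected_graph V E" and "card V \<ge> 2"
  obtains u v where "u \<noteq> v" "mmd V E u v"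
proof -
  have "finite V" using G by (simp add: connected_graph_def simple_graph_def)
  have "symp E" using G by (rule connected_graph_symp)
  have "\<not> card V \<le> Suc 0" using assms(2) by simp
  then obtain a b where ab: "a \<in> V" "b \<in> V" "a \<noteq> b"
    using card_le_Suc0_iff_eq[OF \<open>finite V\<close>] by blast
  let ?D = "(\<lambda>(s, t). dist V E s t) ` (V \<times> V)"
  have "finite ?D" using \<open>finite V\<close> by simp
  have le_Max: "dist V E s t \<le> Max ?D" if "s \<in> V" "t \<in> V" for s t
    using Max_ge[OF \<open>finite ?D\<close>] that by force
  have "Max ?D \<in> ?D" using \<open>finite ?D\<close> ab by (intro Max_in) auto
  then obtain u v where uv: "u \<in> V" "v \<in> V" "dist V E u v = Max ?D" by auto
  obtain p where "walk V E p a b" using G ab by (auto simp: connected_graph_def)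
  then have "dist V E a b \<noteq> 0" using dist_eq_0_imp_eq ab(3) by metis
  then have "u \<noteq> v" using le_Max[OF ab(1,2)] uv dist_self[of u V E] by auto
  moreover have "mmd V E u v"
    using uv le_Max dist_sym[OF \<open>symp E\<close>, of V u v] by (auto simp: mmd_def maximally_distant_def)
  ultimately show ?thesis using that by blast
qed

lemma two_neighbours_if_max_degree_ge_2:
  assumes "finite V" "max_degree V E \<ge> 2"
  obtains a b c where "b \<noteq> c" "E a b" "E a c"
proof -
  let ?S = "insert 0 (degree V E ` V)"
  have "Max ?S \<in> ?S" using assms(1) by (intro Max_in) auto
  then obtain a where "card {y \<in> V. E a y} \<ge> 2"
    using assms(2) by (auto simp: max_degree_def degree_def)
  then have "\<not> card {y \<in> V. E a y} \<le> Suc 0" by simp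
  then obtain b c where "b \<in> {y \<in> V. E a y}" "c \<in> {y \<in> V. E a y}" "b \<noteq> c"
    using card_le_Suc0_iff_eq[of "{y \<in> V. E a y}"] assms(1) by auto
  then show ?thesis using that by blast
qed

definition hitting_pair :: "('a set \<Rightarrow> bool) \<Rightarrow> 'a \<Rightarrow> 'a \<Rightarrow> bool" where
  "hitting_pair W p q \<longleftrightarrow> (\<forall>M. W M \<longrightarrow> p \<in> M \<or> q \<in> M)"

lemma hitting_pair_SR_win:
  assumes "symp E" "mmd V E p q" "p \<noteq> q"
  shows "hitting_pair (SR_win V E) p q"
  using mmd_mem_strong_resolving_set[OF assms(1) _ assms(2,3)]
  unfolding hitting_pair_def SR_win_def by blast

lemma breaker_wins_if_pair_taken:
  assumes "hitting_pair W p q" "finite F" "p \<notin> F \<union> M" "q \<notin> F \<union> M"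
  shows "breaker_wins W (card F) F M t"
  using assms(2-)
proof (induction "card F" arbitrary: F M t)
  case 0
  then show ?case using assms(1) by (auto simp: hitting_pair_def)
next
  case (Suc n F M t)
  have IH: "breaker_wins W n (F - {v}) M' t'" if "v \<in> F" "p \<notin> M'" "q \<notin> M'" for v M' t'
  proof -
    have "n = card (F - {v})" using Suc.hyps(2) that(1) by (simp add: card_Diff_singleton)
    then show ?thesis using Suc.hyps(1)[of "F - {v}" M' t'] Suc.prems that by auto
  qed
  obtain v where "v \<in> F" using Suc.hyps(2) by (metis card.empty ex_in_conv nat.distinct(1))
  then show ?case
    unfolding Suc.hyps(2)[symmetric] using Suc.prems(2,3) by (cases t) (auto intro!: IH)
qed

lemma breaker_wins_by_move:
  assumes "finite F" "v \<in> F" "breaker_wins W (card (F - {v})) (F - {v}) M True"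
  shows "breaker_wins W (card F) F M False"
proof -
  have "breaker_wins W (Suc (card (F - {v}))) F M False"
    using assms(2,3) by (simp only: breaker_wins.simps) blast
  then show ?thesis by (simp only: card_Suc_Diff1[OF assms(1,2)])
qed

lemma breaker_wins_against_all_moves:
  assumes "finite F" "F \<noteq> {}"
    "\<And>v. v \<in> F \<Longrightarrow> breaker_wins W (card (F - {v})) (F - {v}) (insert v M) False"
  shows "breaker_wins W (card F) F M True"
proof -
  have "card F = Suc (card F - 1)" using assms(1,2) by (simp add: card_gt_0_iff)
  moreover have "breaker_wins W (Suc (card F - 1)) F M True"
  proof (simp only: breaker_wins.simps, intro ballI)
    fix v assume "v \<in> F"
    from assms(3)[OF this] show "breaker_wins W (card F - 1) (F - {v}) (insert v M) False"
      by (simp only: card_Diff_singleton[OF \<open>v \<in> F\<close>])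
  qed
  ultimately show ?thesis by (simp only:)
qed

lemma breaker_wins_fork:
  assumes "hitting_pair W p q1" "hitting_pair W p q2" "finite F" "{p, q1, q2} \<subseteq> F"
    "distinct [p, q1, q2]" "{p, q1, q2} \<inter> M = {}"
  shows "breaker_wins W (card F) F M False"
proof (rule breaker_wins_by_move[OF assms(3), of p])
  show "breaker_wins W (card (F - {p})) (F - {p}) M True"
  proof (rule breaker_wins_against_all_moves)
    fix v assume v: "v \<in> F - {p}"
    obtain q where q: "hitting_pair W p q" "q \<in> F - {p} - {v}" "q \<notin> M"
      using assms(1,2,4-6) by (cases "v = q1") auto
    have "breaker_wins W (card (F - {p} - {v} - {q})) (F - {p} - {v} - {q}) (insert v M) True"
      by (rule breaker_wins_if_pair_taken[OF q(1)]) (use assms v q in auto)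
    then show "breaker_wins W (card (F - {p} - {v})) (F - {p} - {v}) (insert v M) False"
      using assms(3) q(2) by (intro breaker_wins_by_move) auto
  qed (use assms in auto)
qed (use assms in auto)

lemma breaker_wins_two_forks:
  assumes "hitting_pair W p1 q11" "hitting_pair W p1 q12"
    "hitting_pair W p2 q21" "hitting_pair W p2 q22"
    "finite F" "{p1, q11, q12, p2, q21, q22} \<subseteq> F" "distinct [p1, q11, q12, p2, q21, q22]"
    "{p1, q11, q12, p2, q21, q22} \<inter> M = {}"
  shows "breaker_wins W (card F) F M True"
proof (rule breaker_wins_against_all_moves)
  fix v assume "v \<in> F"
  show "breaker_wins W (card (F - {v})) (F - {v}) (insert v M) False"
  proof (cases "v \<in> {p1, q11, q12}")
    case True
    then show ?thesis
      using breaker_wins_fork[OF assms(3,4), of "F - {v}" "insert v M"] assms(5-8) by auto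
  next
    case False
    then show ?thesis
      using breaker_wins_fork[OF assms(1,2), of "F - {v}" "insert v M"] assms(5-8) by auto
  qed
qed (use assms in auto)

lemma breaker_wins_imp_not_maker_wins: "breaker_wins W n F M t \<Longrightarrow> \<not> maker_wins W n F M t"
  by (induction W n F M t rule: breaker_wins.induct) auto

lemma O_SR_eq_B_if_two_forks:
  assumes "finite V" "symp E" "distinct [p1, q11, q12, p2, q21, q22]"
    "mmd V E p1 q11" "mmd V E p1 q12" "mmd V E p2 q21" "mmd V E p2 q22"
  shows "O_SR V E = Outcome_B"
proof -
  have hit: "hitting_pair (SR_win V E) p1 q11" "hitting_pair (SR_win V E) p1 q12"
    "hitting_pair (SR_win V E) p2 q21" "hitting_pair (SR_win V E) p2 q22"
    using hitting_pair_SR_win[OF assms(2)] assms(3-7) by auto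
  have "{p1, q11, q12, p2, q21, q22} \<subseteq> V"
    using assms(4-7) by (auto simp: mmd_def maximally_distant_def)
  then have "breaker_wins (SR_win V E) (card V) V {} True"
    "breaker_wins (SR_win V E) (card V) V {} False"
    using breaker_wins_two_forks[OF hit assms(1)] breaker_wins_fork[OF hit(1,2) assms(1)] assms(3)
    by auto
  then show ?thesis
    using breaker_wins_imp_not_maker_wins unfolding O_SR_def Let_def by metis
qed

theorem mainTheorem13:
  fixes VG :: "'a set" and EG :: "'a \<Rightarrow> 'a \<Rightarrow> bool"
    and VH :: "'b set" and EH :: "'b \<Rightarrow> 'b \<Rightarrow> bool"
  assumes "connected_graph VG EG" and "card VG \<ge> 2"
    and "connected_graph VH EH" and "card VH \<ge> 2"
    and "max_degree (sr_vertices VG EG) (sr_edges VG EG) \<ge> 2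
         \<or> max_degree (sr_vertices VH EH) (sr_edges VH EH) \<ge> 2"
  shows "O_SR (VG \<times> VH) (cart_edges EG EH) = Outcome_B"
proof -
  note G = assms(1) and H = assms(3)
  have fin: "finite (VG \<times> VH)"
    using G H by (simp add: connected_graph_def simple_graph_def)
  have sym: "symp (cart_edges EG EH)"
    using G H by (intro symp_cart_edges connected_graph_symp)
  note mmd_GH = mmd_cart[OF G H]
  from assms(5) show ?thesis
  proof
    assume "max_degree (sr_vertices VG EG) (sr_edges VG EG) \<ge> 2"
    then obtain a b c where "b \<noteq> c" "sr_edges VG EG a b" "sr_edges VG EG a c"
      using two_neighbours_if_max_degree_ge_2 finite_sr_vertices[OF G] by metis
    moreover obtain x y where "x \<noteq> y" "mmd VH EH x y" using diametral_pair_mmd[OF H assms(4)] .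
    ultimately show ?thesis
      using mmd_GH mmd_commute[of VH EH x y]
      by (intro O_SR_eq_B_if_two_forks[OF fin sym, of "(a, x)" "(b, y)" "(c, y)" "(a, y)" "(b, x)" "(c, x)"])
        (auto simp: sr_edges_def)
  next
    assume "max_degree (sr_vertices VH EH) (sr_edges VH EH) \<ge> 2"
    then obtain a b c where "b \<noteq> c" "sr_edges VH EH a b" "sr_edges VH EH a c"
      using two_neighbours_if_max_degree_ge_2 finite_sr_vertices[OF H] by metis
    moreover obtain x y where "x \<noteq> y" "mmd VG EG x y" using diametral_pair_mmd[OF G assms(2)] .
    ultimately show ?thesis
      using mmd_GH mmd_commute[of VG EG x y]
      by (intro O_SR_eq_B_if_two_forks[OF fin sym, of "(x, a)" "(y, b)" "(y, c)" "(y, a)" "(x, b)" "(x, c)"])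
        (auto simp: sr_edges_def)
  qed
qed

end
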